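(* Let $(X,\alpha,T)$ be a dynamical system with $T=\mathbb{Z}$ or $T=\mathbb{R}$ acting by homeomorphisms on a compact metrizable space $X$, and suppose that forward proximality and backward proximality are transitive relations. Then exactly one of the following two cases occurs. Case 1: the following equivalent statements hold: (i) proximality is transitive; (ii) $E$ has a unique minimal left ideal; (iii) $\mathcal M=\mathcal M^+=\mathcal M^-$; (iv) $J^+_{min}=J^-_{min}$. Case 2: the following equivalent statements hold: (i) proximality is not transitive; (ii) $E$ has exactly two minimal left ideals, namely $\mathcal M^+$ and $\mathcal M^-$; (iii) $\mathcal M^+\cap\mathcal M^-=\emptyset$; (iv) $J^+_{min}\cap J^-_{min}=\emptyset$.
   Context: $X$ is a compact metrizable space with metric $d$, $T=\mathbb{Z}$ or $\mathbb{R}$ acts by homeomorphisms $\alpha^t$ with $\alpha^{s+t}=\alpha^s\circ\alpha^t$, $\alpha^0=\mathrm{id}$; $T^+$ and $T^-$ denote the nonnegative and nonpositive elements of $T$. $X^X$ is the semigroup of all maps $X\to X$ under composition with the topology of pointwise convergence. $E=E(X,T)$ is the closure of $\{\alpha^t:t\in T\}$ in $X^X$ and $E^\pm$ is the closure of $\{\alpha^t:t\in T^\pm\}$; these are monoids under composition, each possessing a unique minimal two-sided ideal (kernel), denoted $\mathcal M$, $\mathcal M^+$, $\mathcal M^-$ respectively. An idempotent $p$ ($pp=p$) is minimal if it is minimal for the order $p\le q \iff p=pq=qp$; $J^\pm_{min}$ is the set of minimal idempotents of $E^\pm$. Points $x,y$ are proximal if $\inf_{t\in T}d(\alpha^t x,\alpha^t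 y)=0$, forward proximal if $\inf_{t\in T^+}d(\alpha^t x,\alpha^t y)=0$, backward proximal if $\inf_{t\in T^-}d(\alpha^t x,\alpha^t y)=0$. A left ideal of a semigroup $S$ is a non-empty $I\subset S$ with $SI\subset I$. *)

theory Defs
  imports "HOL-Analysis.Analysis"
begin

text \<open>Enveloping semigroup: closure of the set of time maps alpha t (t in S) in the
  space of all self-maps, with the topology of pointwise convergence
  (the product topology on the function type, from HOL-Analysis Function_Topology).\<close>
definition enveloping :: "(real \<Rightarrow> 'a \<Rightarrow> 'a::topological_space) \<Rightarrow> real set \<Rightarrow> ('a \<Rightarrow> 'a) set" where
  "enveloping \<alpha> S = closure (\<alpha> ` S)"

definition left_ideal :: "('a \<Rightarrow> 'a) set \<Rightarrow> ('a \<Rightarrow> 'a) set \<Rightarrow> bool" where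
  "left_ideal S I \<longleftrightarrow> I \<noteq> {} \<and> I \<subseteq> S \<and> (\<forall>p\<in>S. \<forall>q\<in>I. p \<circ> q \<in> I)"

definition minimal_left_ideal :: "('a \<Rightarrow> 'a) set \<Rightarrow> ('a \<Rightarrow> 'a) set \<Rightarrow> bool" where
  "minimal_left_ideal S I \<longleftrightarrow> left_ideal S I \<and> (\<forall>J. left_ideal S J \<and> J \<subseteq> I \<longrightarrow> J = I)"

definition two_sided_ideal :: "('a \<Rightarrow> 'a) set \<Rightarrow> ('a \<Rightarrow> 'a) set \<Rightarrow> bool" where
  "two_sided_ideal S I \<longleftrightarrow> I \<noteq> {} \<and> I \<subseteq> S \<and> (\<forall>p\<in>S. \<forall>q\<in>I. p \<circ> q \<in> I \<and> q \<circ> p \<in> I)"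

definition minimal_two_sided_ideal :: "('a \<Rightarrow> 'a) set \<Rightarrow> ('a \<Rightarrow> 'a) set \<Rightarrow> bool" where
  "minimal_two_sided_ideal S I \<longleftrightarrow>
     two_sided_ideal S I \<and> (\<forall>J. two_sided_ideal S J \<and> J \<subseteq> I \<longrightarrow> J = I)"

definition kernel :: "('a \<Rightarrow> 'a) set \<Rightarrow> ('a \<Rightarrow> 'a) set" where
  "kernel S = (THE I. minimal_two_sided_ideal S I)"

definition idem_le :: "('a \<Rightarrow> 'a) \<Rightarrow> ('a \<Rightarrow> 'a) \<Rightarrow> bool" where
  "idem_le p q \<longleftrightarrow> p = p \<circ> q \<and> p = q \<circ> p"

definition minimal_idempotents :: "('a \<Rightarrow> 'a) set \<Rightarrow> ('a \<Rightarrow> 'a) set" where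
  "minimal_idempotents S =
     {p \<in> S. p \<circ> p = p \<and> (\<forall>q\<in>S. q \<circ> q = q \<and> idem_le q p \<longrightarrow> q = p)}"

definition proximal_on :: "(real \<Rightarrow> 'a \<Rightarrow> 'a::metric_space) \<Rightarrow> real set \<Rightarrow> 'a \<Rightarrow> 'a \<Rightarrow> bool" where
  "proximal_on \<alpha> S x y \<longleftrightarrow> (INF t\<in>S. dist (\<alpha> t x) (\<alpha> t y)) = 0"

definition transitive_rel :: "('a \<Rightarrow> 'a \<Rightarrow> bool) \<Rightarrow> bool" where
  "transitive_rel R \<longleftrightarrow> (\<forall>x y z. R x y \<and> R y z \<longrightarrow> R x z)"

end

theory Submission
  imports Defs
begin

(* The enveloping semigroups E, E^+ and E^- are compact monoids in which composition is
   continuous in the left factor, and x, y are proximal along a time set S iff p x = p y for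
   some p in the corresponding enveloping semigroup.  In such a monoid proximality is transitive
   iff there is only one minimal left ideal: if u is an idempotent of one minimal left ideal and
   v an idempotent of another with v u = u, then u x ~ x ~ v x while v fixes u x and v x, which
   forces u = v.  A unique minimal left ideal is the kernel and contains the minimal idempotents.
   Since every alpha^s commutes with E, the minimal left ideal M^+ of E^+ is mapped onto itself
   by alpha^s for s >= 0, hence is invariant under all alpha^t and is a minimal left ideal of E;
   likewise M^-.  As E is the union of E^+ and E^-, every minimal left ideal of E meets, and so
   equals, M^+ or M^-. *)

section \<open>Compactness in the space of self-maps\<close>

lemma compact_UNIV_fun:
  assumes "compact (UNIV :: 'a::topological_space set)"
  shows "compact (UNIV :: ('b \<Rightarrow> 'a) set)"
proof -
  have "compact_space (product_topology (\<lambda>i::'b. euclidean :: 'a topology) UNIV)"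
    using assms by (subst compact_space_product_topology) (simp add: compact_space_def)
  then show ?thesis by (simp add: euclidean_product_topology compact_space_def)
qed

lemma compact_imp_closed_fun:
  fixes K :: "('b \<Rightarrow> 'a::metric_space) set"
  assumes "compact K"
  shows "closed K"
proof -
  have "Hausdorff_space (product_topology (\<lambda>i::'b. euclidean :: 'a topology) UNIV)"
    by (simp add: Hausdorff_space_product_topology Hausdorff_space_euclidean)
  then have "Hausdorff_space (euclidean :: ('b \<Rightarrow> 'a) topology)"
    by (simp only: euclidean_product_topology)
  moreover have "compactin euclidean K" using assms by simp
  ultimately show ?thesis by (simp only: closed_closedin compactin_imp_closedin)
qed

lemma closed_Collect_fun_eq:
  fixes f g :: "'x::topological_space \<Rightarrow> 'b \<Rightarrow> 'a::metric_space"
  assumes "\<And>y. continuous_on UNIV (\<lambda>p. f p y)" "\<And>y. continuous_on UNIV (\<lambda>p. g p y)"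
  shows "closed {p. f p = g p}"
proof -
  have "{p. f p = g p} = (\<Inter>y. {p. f p y = g p y})" by (auto simp: fun_eq_iff)
  moreover have "closed (\<Inter>y. {p. f p y = g p y})"
    by (intro closed_INT ballI closed_Collect_eq assms)
  ultimately show ?thesis by simp
qed

lemma continuous_on_comp_right: "continuous_on UNIV (\<lambda>p::'a \<Rightarrow> 'b::topological_space. p \<circ> q)"
  by (rule continuous_on_coordinatewise_then_product) (simp add: o_def)

lemma continuous_on_comp_left:
  assumes "continuous_on UNIV f"
  shows "continuous_on UNIV (\<lambda>p::'a \<Rightarrow> 'b::topological_space. f \<circ> p)"
proof (rule continuous_on_coordinatewise_then_product)
  fix i
  have "continuous_on UNIV (f \<circ> (\<lambda>p::'a \<Rightarrow> 'b. p i))"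
    by (rule continuous_on_compose) (auto intro: continuous_on_subset[OF assms])
  then show "continuous_on UNIV (\<lambda>p. (f \<circ> p) i)" by (simp add: o_def)
qed

lemma subset_Zorn_minimal:
  assumes "\<F> \<noteq> {}" and ch: "\<And>\<C>. \<C> \<noteq> {} \<Longrightarrow> subset.chain \<F> \<C> \<Longrightarrow> \<Inter>\<C> \<in> \<F>"
  shows "\<exists>M\<in>\<F>. \<forall>X\<in>\<F>. X \<subseteq> M \<longrightarrow> X = M"
proof -
  have "\<exists>M\<in>uminus ` \<F>. \<forall>X\<in>uminus ` \<F>. M \<subseteq> X \<longrightarrow> X = M"
  proof (rule subset_Zorn_nonempty)
    show "uminus ` \<F> \<noteq> {}" using assms(1) by simp
    fix \<C> assume \<C>: "\<C> \<noteq> {}" "subset.chain (uminus ` \<F>) \<C>"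
    then have "subset.chain \<F> (uminus ` \<C>)"
      unfolding subset_chain_def by (auto simp: double_compl)
    then have "\<Inter>(uminus ` \<C>) \<in> \<F>" using \<C>(1) by (intro ch) auto
    moreover have "\<Union>\<C> = - \<Inter>(uminus ` \<C>)" by auto
    ultimately show "\<Union>\<C> \<in> uminus ` \<F>" by blast
  qed
  then obtain M where "M \<in> \<F>" "\<And>X. X \<in> \<F> \<Longrightarrow> - M \<subseteq> - X \<Longrightarrow> X = M"
    by (auto simp: double_compl)
  then show ?thesis by blast
qed

lemma compact_chain_Inter_nonempty:
  fixes \<C> :: "'a::topological_space set set"
  assumes "compact K" "\<C> \<noteq> {}" "\<And>A. A \<in> \<C> \<Longrightarrow> closed A \<and> A \<noteq> {} \<and> A \<subseteq> K"
    and chain: "subset.chain \<C> \<C>"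
  shows "\<Inter>\<C> \<noteq> {}"
proof -
  have "K \<inter> \<Inter>\<C> \<noteq> {}"
  proof (rule compact_imp_fip[OF \<open>compact K\<close>])
    fix \<F> assume \<F>: "finite \<F>" "\<F> \<subseteq> \<C>"
    show "K \<inter> \<Inter>\<F> \<noteq> {}"
    proof (cases "\<F> = {}")
      case True
      then show ?thesis using assms(2,3) by fastforce
    next
      case False
      have "subset.chain \<C> \<F>" using \<F>(2) chain by (auto simp: subset_chain_def)
      then have "\<Inter>\<F> \<in> \<F>" using Inter_in_chain[OF \<F>(1) False] by blast
      then show ?thesis using assms(3) \<F>(2) by blast
    qed
  qed (use assms(3) in blast)
  then show ?thesis by blast
qed

lemma compact_closed_Zorn_minimal:
  assumes "compact K" "\<F> \<noteq> {}"
    and closed: "\<And>A. A \<in> \<F> \<Longrightarrow> closed A \<and> A \<noteq> {} \<and> A \<subseteq> K"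
    and ch: "\<And>\<C>. \<C> \<noteq> {} \<Longrightarrow> subset.chain \<F> \<C> \<Longrightarrow> \<Inter>\<C> \<noteq> {} \<Longrightarrow> \<Inter>\<C> \<in> \<F>"
  shows "\<exists>M\<in>\<F>. \<forall>X\<in>\<F>. X \<subseteq> M \<longrightarrow> X = M"
proof (rule subset_Zorn_minimal[OF \<open>\<F> \<noteq> {}\<close>])
  fix \<C> assume \<C>: "\<C> \<noteq> {}" "subset.chain \<F> \<C>"
  then have "\<Inter>\<C> \<noteq> {}"
    by (intro compact_chain_Inter_nonempty[OF \<open>compact K\<close>]) (auto simp: subset_chain_def dest: closed)
  with \<C> show "\<Inter>\<C> \<in> \<F>" by (rule ch)
qed

lemma closed_subsemigroup_minimal_exists:
  fixes L :: "('a::metric_space \<Rightarrow> 'a) set"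
  assumes "compact (UNIV :: 'a set)" "closed L" "L \<noteq> {}" "\<forall>x\<in>L. \<forall>y\<in>L. x \<circ> y \<in> L"
  obtains M where "closed M" "M \<noteq> {}" "M \<subseteq> L" "\<forall>x\<in>M. \<forall>y\<in>M. x \<circ> y \<in> M"
    and "\<And>B. closed B \<Longrightarrow> B \<noteq> {} \<Longrightarrow> B \<subseteq> M \<Longrightarrow> \<forall>x\<in>B. \<forall>y\<in>B. x \<circ> y \<in> B \<Longrightarrow> B = M"
proof -
  define \<F> where "\<F> = {B. closed B \<and> B \<noteq> {} \<and> B \<subseteq> L \<and> (\<forall>x\<in>B. \<forall>y\<in>B. x \<circ> y \<in> B)}"
  have "compact L"
    using compact_Int_closed[OF compact_UNIV_fun[OF assms(1)] \<open>closed L\<close>] by simp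
  moreover have "L \<in> \<F>" using assms unfolding \<F>_def by blast
  ultimately have "\<exists>M\<in>\<F>. \<forall>B\<in>\<F>. B \<subseteq> M \<longrightarrow> B = M"
  proof (intro compact_closed_Zorn_minimal[of L])
    fix \<C> assume \<C>: "\<C> \<noteq> {}" "subset.chain \<F> \<C>" "\<Inter>\<C> \<noteq> {}"
    then have "\<C> \<subseteq> \<F>" by (simp add: subset_chain_def)
    then have "closed (\<Inter>\<C>)" unfolding \<F>_def by (simp add: closed_Inter subset_eq)
    moreover have "\<Inter>\<C> \<subseteq> L" "\<forall>x\<in>\<Inter>\<C>. \<forall>y\<in>\<Inter>\<C>. x \<circ> y \<in> \<Inter>\<C>"
      using \<C>(1) \<open>\<C> \<subseteq> \<F>\<close> unfolding \<F>_def by blast+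
    ultimately show "\<Inter>\<C> \<in> \<F>" using \<C>(3) unfolding \<F>_def by blast
  qed (auto simp: \<F>_def)
  then obtain M where M: "M \<in> \<F>" and M_min: "\<And>B. B \<in> \<F> \<Longrightarrow> B \<subseteq> M \<Longrightarrow> B = M" by blast
  show ?thesis
  proof (rule that)
    show "closed M" "M \<noteq> {}" "M \<subseteq> L" "\<forall>x\<in>M. \<forall>y\<in>M. x \<circ> y \<in> M" using M unfolding \<F>_def by blast+
    show "B = M" if B: "closed B" "B \<noteq> {}" "B \<subseteq> M" "\<forall>x\<in>B. \<forall>y\<in>B. x \<circ> y \<in> B" for B
    proof (rule M_min[OF _ B(3)])
      have "B \<subseteq> L" using B(3) M unfolding \<F>_def by blast
      then show "B \<in> \<F>" using B(1,2,4) unfolding \<F>_def by blast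
    qed
  qed
qed

lemma closed_subsemigroup_has_idempotent:
  fixes L :: "('a::metric_space \<Rightarrow> 'a) set"
  assumes "compact (UNIV :: 'a set)" "closed L" "L \<noteq> {}" "\<forall>x\<in>L. \<forall>y\<in>L. x \<circ> y \<in> L"
  shows "\<exists>u\<in>L. u \<circ> u = u"
proof -
  obtain M where M: "closed M" "M \<noteq> {}" "M \<subseteq> L" "\<And>x y. x \<in> M \<Longrightarrow> y \<in> M \<Longrightarrow> x \<circ> y \<in> M"
    and M_min: "\<And>B. closed B \<Longrightarrow> B \<noteq> {} \<Longrightarrow> B \<subseteq> M \<Longrightarrow> \<forall>x\<in>B. \<forall>y\<in>B. x \<circ> y \<in> B \<Longrightarrow> B = M"
    using closed_subsemigroup_minimal_exists[OF assms] by metis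
  obtain a where a: "a \<in> M" using M(2) by blast
  have "compact M"
    using compact_Int_closed[OF compact_UNIV_fun[OF assms(1)] \<open>closed M\<close>] by simp
  then have "closed ((\<lambda>p. p \<circ> a) ` M)"
    by (intro compact_imp_closed_fun compact_continuous_image
        continuous_on_subset[OF continuous_on_comp_right]) simp
  moreover have "(\<lambda>p. p \<circ> a) ` M \<noteq> {}" "(\<lambda>p. p \<circ> a) ` M \<subseteq> M" using a M(4) by blast+
  moreover have "\<forall>x\<in>(\<lambda>p. p \<circ> a) ` M. \<forall>y\<in>(\<lambda>p. p \<circ> a) ` M. x \<circ> y \<in> (\<lambda>p. p \<circ> a) ` M"
  proof (intro ballI)
    fix x y assume "x \<in> (\<lambda>p. p \<circ> a) ` M" "y \<in> (\<lambda>p. p \<circ> a) ` M"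
    then obtain x' y' where "x' \<in> M" "y' \<in> M" "x = x' \<circ> a" "y = y' \<circ> a" by blast
    then have "x \<circ> y = (x' \<circ> a \<circ> y') \<circ> a" by (simp add: o_assoc)
    then show "x \<circ> y \<in> (\<lambda>p. p \<circ> a) ` M" using M(4) a \<open>x' \<in> M\<close> \<open>y' \<in> M\<close> by blast
  qed
  ultimately have "(\<lambda>p. p \<circ> a) ` M = M" by (rule M_min)
  then obtain b where "b \<in> M" "b \<circ> a = a" using a by (metis imageE)
  have "closed {x. x \<circ> a = (\<lambda>x. a) x}" by (rule closed_Collect_fun_eq) (simp_all add: o_def)
  then have "closed (M \<inter> {x. x \<circ> a = a})" using M(1) by (simp add: closed_Int)
  then have "M \<inter> {x. x \<circ> a = a} = M"
    using M \<open>b \<in> M\<close> \<open>b \<circ> a = a\<close> by (intro M_min) (auto simp: comp_assoc)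
  then show ?thesis using a M(3) by blast
qed

section \<open>Minimal left ideals of a compact monoid of maps\<close>

lemma left_ideal_subset: "left_ideal S I \<Longrightarrow> I \<subseteq> S"
  and left_ideal_nonempty: "left_ideal S I \<Longrightarrow> I \<noteq> {}"
  and left_ideal_comp: "left_ideal S I \<Longrightarrow> p \<in> S \<Longrightarrow> q \<in> I \<Longrightarrow> p \<circ> q \<in> I"
  unfolding left_ideal_def by blast+

lemma minimal_left_ideal_is_left_ideal: "minimal_left_ideal S L \<Longrightarrow> left_ideal S L"
  and minimal_left_idealD: "minimal_left_ideal S L \<Longrightarrow> left_ideal S J \<Longrightarrow> J \<subseteq> L \<Longrightarrow> J = L"
  unfolding minimal_left_ideal_def by blast+

lemma minimal_left_ideal_subset: "minimal_left_ideal S L \<Longrightarrow> L \<subseteq> S"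
  and minimal_left_ideal_nonempty: "minimal_left_ideal S L \<Longrightarrow> L \<noteq> {}"
  and minimal_left_ideal_comp: "minimal_left_ideal S L \<Longrightarrow> p \<in> S \<Longrightarrow> q \<in> L \<Longrightarrow> p \<circ> q \<in> L"
  by (auto dest: minimal_left_ideal_is_left_ideal left_ideal_subset left_ideal_nonempty left_ideal_comp)

lemma left_ideal_Int:
  "left_ideal S I \<Longrightarrow> left_ideal S J \<Longrightarrow> I \<inter> J \<noteq> {} \<Longrightarrow> left_ideal S (I \<inter> J)"
  unfolding left_ideal_def by blast

lemma left_ideal_comp_right:
  assumes "left_ideal S I" "q \<in> S" and comp: "\<And>p q. p \<in> S \<Longrightarrow> q \<in> S \<Longrightarrow> p \<circ> q \<in> S"
  shows "left_ideal S ((\<lambda>p. p \<circ> q) ` I)"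
  unfolding left_ideal_def
proof (intro conjI ballI)
  show "(\<lambda>p. p \<circ> q) ` I \<noteq> {}" "(\<lambda>p. p \<circ> q) ` I \<subseteq> S"
    using assms left_ideal_subset left_ideal_nonempty by blast+
  fix p r assume "p \<in> S" "r \<in> (\<lambda>p. p \<circ> q) ` I"
  then obtain i where "i \<in> I" "p \<circ> r = (p \<circ> i) \<circ> q" by (auto simp: o_assoc)
  then show "p \<circ> r \<in> (\<lambda>p. p \<circ> q) ` I" using left_ideal_comp[OF assms(1) \<open>p \<in> S\<close>] by blast
qed

lemma minimal_left_ideals_disjoint:
  "minimal_left_ideal S L1 \<Longrightarrow> minimal_left_ideal S L2 \<Longrightarrow> L1 \<noteq> L2 \<Longrightarrow> L1 \<inter> L2 = {}"
  by (metis inf.cobounded1 inf.cobounded2 left_ideal_Int minimal_left_idealD minimal_left_ideal_is_left_ideal)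

lemma two_sided_ideal_imp_left_ideal: "two_sided_ideal S I \<Longrightarrow> left_ideal S I"
  unfolding two_sided_ideal_def left_ideal_def by blast

lemma two_sided_ideal_Int:
  assumes "two_sided_ideal S I" "two_sided_ideal S J"
  shows "two_sided_ideal S (I \<inter> J)"
proof -
  obtain i j where "i \<in> I" "j \<in> J" using assms unfolding two_sided_ideal_def by blast
  then have "i \<circ> j \<in> I \<inter> J" using assms unfolding two_sided_ideal_def by blast
  then show ?thesis using assms unfolding two_sided_ideal_def by blast
qed

locale self_map_monoid =
  fixes A :: "('a::metric_space \<Rightarrow> 'a) set"
  assumes compact_UNIV: "compact (UNIV :: 'a set)"
    and continuous_on_A: "\<And>f. f \<in> A \<Longrightarrow> continuous_on UNIV f"
    and id_in_A: "id \<in> A"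
    and comp_in_A: "\<And>f g. f \<in> A \<Longrightarrow> g \<in> A \<Longrightarrow> f \<circ> g \<in> A"
begin

abbreviation E :: "('a \<Rightarrow> 'a) set" where "E \<equiv> closure A"

lemma compact_E: "compact E"
  using compact_Int_closed[OF compact_UNIV_fun[OF compact_UNIV] closed_closure, of A] by simp

lemma id_in_E: "id \<in> E"
  using id_in_A closure_subset by blast

lemma comp_in_E:
  assumes "p \<in> E" "q \<in> E"
  shows "p \<circ> q \<in> E"
proof -
  have "f \<circ> q \<in> E" if "f \<in> A" for f
  proof -
    have "(\<lambda>r. f \<circ> r) ` A \<subseteq> E" using comp_in_A[OF that] closure_subset by blast
    then have "(\<lambda>r. f \<circ> r) ` E \<subseteq> E"
      by (intro image_closure_subset continuous_on_subset[OF continuous_on_comp_left]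
          continuous_on_A[OF that]) auto
    then show ?thesis using assms(2) by blast
  qed
  then have "(\<lambda>r. r \<circ> q) ` E \<subseteq> E"
    by (intro image_closure_subset continuous_on_subset[OF continuous_on_comp_right]) auto
  then show ?thesis using assms(1) by blast
qed

lemma left_ideal_principal: "q \<in> E \<Longrightarrow> left_ideal E ((\<lambda>p. p \<circ> q) ` E)"
proof (rule left_ideal_comp_right[OF _ _ comp_in_E])
  show "left_ideal E E" unfolding left_ideal_def using id_in_E comp_in_E by auto
qed

lemma closed_principal: "closed ((\<lambda>p. p \<circ> q) ` E)"
  by (intro compact_imp_closed_fun compact_continuous_image compact_E
      continuous_on_subset[OF continuous_on_comp_right]) simp

lemma principal_subset_left_ideal: "left_ideal E I \<Longrightarrow> q \<in> I \<Longrightarrow> (\<lambda>p. p \<circ> q) ` E \<subseteq> I"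
  using left_ideal_comp by blast

lemma minimal_left_ideal_eq_principal:
  assumes L: "minimal_left_ideal E L" and "q \<in> L"
  shows "L = (\<lambda>p. p \<circ> q) ` E"
proof -
  have "q \<in> E" using assms minimal_left_ideal_subset by blast
  show ?thesis
    by (rule minimal_left_idealD[OF L left_ideal_principal[OF \<open>q \<in> E\<close>], symmetric])
      (rule principal_subset_left_ideal[OF minimal_left_ideal_is_left_ideal[OF L] \<open>q \<in> L\<close>])
qed

lemma closed_minimal_left_ideal:
  assumes "minimal_left_ideal E L"
  shows "closed L"
proof -
  obtain q where "q \<in> L" using minimal_left_ideal_nonempty[OF assms] by blast
  then show ?thesis using minimal_left_ideal_eq_principal[OF assms] closed_principal by metis
qed

lemma minimal_left_ideal_exists:
  assumes I: "left_ideal E I"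
  shows "\<exists>L. minimal_left_ideal E L \<and> L \<subseteq> I"
proof -
  define \<F> where "\<F> = {L. closed L \<and> left_ideal E L \<and> L \<subseteq> I}"
  have "\<exists>M\<in>\<F>. \<forall>L\<in>\<F>. L \<subseteq> M \<longrightarrow> L = M"
  proof (rule compact_closed_Zorn_minimal[OF compact_E])
    obtain q where "q \<in> I" using left_ideal_nonempty[OF I] by blast
    then have "q \<in> E" using left_ideal_subset[OF I] by blast
    have "(\<lambda>p. p \<circ> q) ` E \<in> \<F>"
      using left_ideal_principal[OF \<open>q \<in> E\<close>] closed_principal principal_subset_left_ideal[OF I \<open>q \<in> I\<close>]
      unfolding \<F>_def by blast
    then show "\<F> \<noteq> {}" by blast
    show "closed L \<and> L \<noteq> {} \<and> L \<subseteq> E" if "L \<in> \<F>" for L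
      using that left_ideal_nonempty left_ideal_subset unfolding \<F>_def by blast
    fix \<C> assume \<C>: "\<C> \<noteq> {}" "subset.chain \<F> \<C>" "\<Inter>\<C> \<noteq> {}"
    then have "\<C> \<subseteq> \<F>" by (simp add: subset_chain_def)
    then have "closed (\<Inter>\<C>)" unfolding \<F>_def by (simp add: closed_Inter subset_eq)
    moreover have "left_ideal E (\<Inter>\<C>)" "\<Inter>\<C> \<subseteq> I"
      using \<C>(1,3) \<open>\<C> \<subseteq> \<F>\<close> unfolding \<F>_def left_ideal_def by blast+
    ultimately show "\<Inter>\<C> \<in> \<F>" unfolding \<F>_def by blast
  qed
  then obtain M where M: "M \<in> \<F>" and M_min: "\<And>L. L \<in> \<F> \<Longrightarrow> L \<subseteq> M \<Longrightarrow> L = M" by blast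
  have "J = M" if J: "left_ideal E J" "J \<subseteq> M" for J
  proof -
    obtain r where "r \<in> J" using left_ideal_nonempty[OF J(1)] by blast
    then have "(\<lambda>p. p \<circ> r) ` E \<subseteq> J" "r \<in> E"
      using principal_subset_left_ideal[OF J(1)] left_ideal_subset[OF J(1)] by blast+
    then have "(\<lambda>p. p \<circ> r) ` E \<in> \<F>"
      using J M left_ideal_principal closed_principal unfolding \<F>_def by blast
    then show "J = M" using M_min \<open>(\<lambda>p. p \<circ> r) ` E \<subseteq> J\<close> J(2) by blast
  qed
  then show ?thesis using M unfolding \<F>_def minimal_left_ideal_def by blast
qed

lemma minimal_left_ideal_has_idempotent:
  assumes "minimal_left_ideal E L"
  shows "\<exists>u\<in>L. u \<circ> u = u"
proof (rule closed_subsemigroup_has_idempotent[OF compact_UNIV closed_minimal_left_ideal[OF assms]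
      minimal_left_ideal_nonempty[OF assms]])
  show "\<forall>x\<in>L. \<forall>y\<in>L. x \<circ> y \<in> L"
    using minimal_left_ideal_comp[OF assms] minimal_left_ideal_subset[OF assms] by blast
qed

lemma minimal_left_ideal_comp_right:
  assumes L: "minimal_left_ideal E L" and "q \<in> E"
  shows "minimal_left_ideal E ((\<lambda>l. l \<circ> q) ` L)"
  unfolding minimal_left_ideal_def
proof (intro conjI allI impI)
  show "left_ideal E ((\<lambda>l. l \<circ> q) ` L)"
    using left_ideal_comp_right[OF minimal_left_ideal_is_left_ideal[OF L] \<open>q \<in> E\<close> comp_in_E] .
  fix J assume J: "left_ideal E J \<and> J \<subseteq> (\<lambda>l. l \<circ> q) ` L"
  have "left_ideal E {l \<in> L. l \<circ> q \<in> J}"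
    unfolding left_ideal_def
  proof (intro conjI ballI)
    show "{l \<in> L. l \<circ> q \<in> J} \<noteq> {}" using J left_ideal_nonempty by blast
    show "{l \<in> L. l \<circ> q \<in> J} \<subseteq> E" using minimal_left_ideal_subset[OF L] by blast
    fix p l assume "p \<in> E" "l \<in> {l \<in> L. l \<circ> q \<in> J}"
    moreover have "p \<circ> (l \<circ> q) \<in> J" using J calculation left_ideal_comp by blast
    ultimately show "p \<circ> l \<in> {l \<in> L. l \<circ> q \<in> J}"
      using minimal_left_ideal_comp[OF L] by (simp add: o_assoc)
  qed
  then have "{l \<in> L. l \<circ> q \<in> J} = L" using minimal_left_idealD[OF L] by blast
  then show "J = (\<lambda>l. l \<circ> q) ` L" using J by blast
qed

text \<open>The algebraic form of proximality; \<open>proximal_on_iff_enveloping\<close> identifies it with the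
  metric one.\<close>

definition proximal :: "'a \<Rightarrow> 'a \<Rightarrow> bool" where
  "proximal x y \<longleftrightarrow> (\<exists>p\<in>E. p x = p y)"

lemma proximal_fixed_points_eq:
  assumes "proximal a b" and L: "minimal_left_ideal E L" and "v \<in> L" "v a = a" "v b = b"
  shows "a = b"
proof -
  obtain p where p: "p \<in> E" "p a = p b" using assms(1) unfolding proximal_def by blast
  have "p \<circ> v \<in> L" using minimal_left_ideal_comp[OF L p(1) \<open>v \<in> L\<close>] .
  then have "v \<in> (\<lambda>q. q \<circ> (p \<circ> v)) ` E" using minimal_left_ideal_eq_principal[OF L] \<open>v \<in> L\<close> by blast
  then obtain q where "v = q \<circ> p \<circ> v" by (auto simp: o_assoc)
  then have "v a = v b" using p(2) \<open>v a = a\<close> \<open>v b = b\<close> by (metis comp_apply)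
  then show ?thesis using \<open>v a = a\<close> \<open>v b = b\<close> by simp
qed

lemma idempotent_left_unit_in_minimal_left_ideal:
  assumes L1: "minimal_left_ideal E L1" and L2: "minimal_left_ideal E L2" and "u \<in> L1"
  shows "\<exists>v\<in>L2. v \<circ> v = v \<and> v \<circ> u = u"
proof -
  have "u \<in> E" using minimal_left_ideal_subset[OF L1] \<open>u \<in> L1\<close> by blast
  have "(\<lambda>l. l \<circ> u) ` L2 = L1"
    using minimal_left_idealD[OF L1 left_ideal_comp_right[OF minimal_left_ideal_is_left_ideal[OF L2]
          \<open>u \<in> E\<close> comp_in_E]]
      minimal_left_ideal_comp[OF L1 _ \<open>u \<in> L1\<close>] minimal_left_ideal_subset[OF L2]
    by blast
  then obtain l where "l \<in> L2" "l \<circ> u = u" using \<open>u \<in> L1\<close> by (metis imageE)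
  have "closed {l. l \<circ> u = (\<lambda>l. u) l}" by (rule closed_Collect_fun_eq) (simp_all add: o_def)
  then have "closed (L2 \<inter> {l. l \<circ> u = u})" using closed_minimal_left_ideal[OF L2] by (simp add: closed_Int)
  moreover have "\<forall>x\<in>L2 \<inter> {l. l \<circ> u = u}. \<forall>y\<in>L2 \<inter> {l. l \<circ> u = u}. x \<circ> y \<in> L2 \<inter> {l. l \<circ> u = u}"
    using minimal_left_ideal_comp[OF L2] minimal_left_ideal_subset[OF L2] by (auto simp: comp_assoc)
  ultimately show ?thesis
    using closed_subsemigroup_has_idempotent[OF compact_UNIV, of "L2 \<inter> {l. l \<circ> u = u}"]
      \<open>l \<in> L2\<close> \<open>l \<circ> u = u\<close> by blast
qed

lemma minimal_left_ideal_unique_if_transitive: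
  assumes "transitive_rel proximal" and L1: "minimal_left_ideal E L1" and L2: "minimal_left_ideal E L2"
  shows "L1 = L2"
proof -
  obtain u where u: "u \<in> L1" "u \<circ> u = u" using minimal_left_ideal_has_idempotent[OF L1] by blast
  obtain v where v: "v \<in> L2" "v \<circ> v = v" "v \<circ> u = u"
    using idempotent_left_unit_in_minimal_left_ideal[OF L1 L2 \<open>u \<in> L1\<close>] by blast
  have "u \<in> E" "v \<in> E" using u v minimal_left_ideal_subset[OF L1] minimal_left_ideal_subset[OF L2] by blast+
  have "u x = v x" for x
  proof (rule proximal_fixed_points_eq[OF _ L2 \<open>v \<in> L2\<close>])
    have "proximal (u x) x" "proximal x (v x)"
      using \<open>u \<in> E\<close> \<open>v \<in> E\<close> u(2) v(2) unfolding proximal_def by (metis comp_apply)+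
    then show "proximal (u x) (v x)" using assms(1) unfolding transitive_rel_def by blast
    show "v (u x) = u x" "v (v x) = v x" using u(2) v(2,3) by (metis comp_apply)+
  qed
  then have "u \<in> L1 \<inter> L2" using u v by (metis IntI ext)
  then show ?thesis using minimal_left_ideals_disjoint[OF L1 L2] by blast
qed

lemma proximal_imp_eq_on_unique_minimal_left_ideal:
  assumes "proximal a b" and uniq: "\<And>L'. minimal_left_ideal E L' \<Longrightarrow> L' = L" and "s \<in> L"
  shows "s a = s b"
proof -
  obtain p where p: "p \<in> E" "p a = p b" using assms(1) unfolding proximal_def by blast
  obtain L' where "minimal_left_ideal E L'" "L' \<subseteq> (\<lambda>q. q \<circ> p) ` E"
    using minimal_left_ideal_exists[OF left_ideal_principal[OF p(1)]] by blast
  then have "s \<in> (\<lambda>q. q \<circ> p) ` E" using uniq \<open>s \<in> L\<close> by blast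
  then show ?thesis using p(2) by auto
qed

lemma transitive_proximal_iff_unique_minimal_left_ideal:
  "transitive_rel proximal \<longleftrightarrow> (\<exists>!L. minimal_left_ideal E L)"
proof
  assume "transitive_rel proximal"
  then show "\<exists>!L. minimal_left_ideal E L"
    using minimal_left_ideal_exists[OF left_ideal_principal[OF id_in_E]]
      minimal_left_ideal_unique_if_transitive by blast
next
  assume "\<exists>!L. minimal_left_ideal E L"
  then obtain L where L: "minimal_left_ideal E L" and uniq: "\<And>L'. minimal_left_ideal E L' \<Longrightarrow> L' = L"
    by blast
  obtain s where "s \<in> L" using minimal_left_ideal_nonempty[OF L] by blast
  then have "s \<in> E" using minimal_left_ideal_subset[OF L] by blast
  have "s a = s b" if "proximal a b" for a b
    using proximal_imp_eq_on_unique_minimal_left_ideal[OF that uniq \<open>s \<in> L\<close>] .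
  then show "transitive_rel proximal"
    unfolding transitive_rel_def proximal_def using \<open>s \<in> E\<close> by metis
qed

lemma minimal_left_ideal_iff_kernel:
  assumes "\<exists>!L. minimal_left_ideal E L"
  shows "minimal_left_ideal E L \<longleftrightarrow> L = kernel E"
proof -
  obtain L where L: "minimal_left_ideal E L" and uniq: "\<And>L'. minimal_left_ideal E L' \<Longrightarrow> L' = L"
    using assms by blast
  have "q \<circ> p \<in> L" if "p \<in> E" "q \<in> L" for p q
    using uniq[OF minimal_left_ideal_comp_right[OF L \<open>p \<in> E\<close>]] \<open>q \<in> L\<close> by blast
  then have L2: "two_sided_ideal E L"
    using minimal_left_ideal_comp[OF L] minimal_left_ideal_subset[OF L] minimal_left_ideal_nonempty[OF L]
    unfolding two_sided_ideal_def by blast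
  have "two_sided_ideal E J \<Longrightarrow> J \<subseteq> L \<Longrightarrow> J = L" for J
    using minimal_left_idealD[OF L] two_sided_ideal_imp_left_ideal by blast
  then have L_min: "minimal_two_sided_ideal E L"
    using L2 unfolding minimal_two_sided_ideal_def by blast
  have L_only: "I = L" if I: "minimal_two_sided_ideal E I" for I
  proof -
    have "two_sided_ideal E (L \<inter> I)"
      using two_sided_ideal_Int[OF L2] I unfolding minimal_two_sided_ideal_def by blast
    then have "L \<inter> I = I" "L \<inter> I = L"
      using I L_min unfolding minimal_two_sided_ideal_def by blast+
    then show ?thesis by simp
  qed
  have "kernel E = L"
    unfolding kernel_def by (rule the_equality[where P = "minimal_two_sided_ideal E", OF L_min L_only])
  then show ?thesis using L uniq by blast
qed

lemma minimal_idempotentI: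
  assumes L: "minimal_left_ideal E L" and "p \<in> L" "p \<circ> p = p"
  shows "p \<in> minimal_idempotents E"
proof -
  have "q = p" if q: "q \<in> E" "q \<circ> q = q" "idem_le q p" for q
  proof -
    have qp: "q = q \<circ> p" "q = p \<circ> q" using q(3) unfolding idem_le_def by blast+
    then have "q \<in> L" using minimal_left_ideal_comp[OF L q(1) \<open>p \<in> L\<close>] by simp
    then obtain r where "p = r \<circ> q"
      using minimal_left_ideal_eq_principal[OF L] \<open>p \<in> L\<close> by blast
    then have "p \<circ> q = p" using q(2) by (simp add: comp_assoc)
    then show ?thesis using qp(2) by simp
  qed
  then show ?thesis
    using assms minimal_left_ideal_subset[OF L] unfolding minimal_idempotents_def by blast
qed

lemma minimal_idempotents_eq:
  assumes "\<exists>!L. minimal_left_ideal E L"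
  shows "minimal_idempotents E = {p \<in> kernel E. p \<circ> p = p}"
proof -
  have L: "minimal_left_ideal E (kernel E)"
    using minimal_left_ideal_iff_kernel[OF assms] by blast
  have "p \<in> kernel E" if p: "p \<in> minimal_idempotents E" for p
  proof -
    have "p \<in> E" "p \<circ> p = p" and p_min: "\<And>q. q \<in> E \<Longrightarrow> q \<circ> q = q \<Longrightarrow> idem_le q p \<Longrightarrow> q = p"
      using p unfolding minimal_idempotents_def by blast+
    obtain e where e: "e \<in> kernel E" "e \<circ> e = e" using minimal_left_ideal_has_idempotent[OF L] by blast
    have "(\<lambda>l. l \<circ> p) ` kernel E = kernel E"
      by (rule minimal_left_ideal_iff_kernel[OF assms, THEN iffD1,
            OF minimal_left_ideal_comp_right[OF L \<open>p \<in> E\<close>]])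
    then obtain e' where "e = e' \<circ> p" using e(1) by (metis imageE)
    then have "e \<circ> p = e" using \<open>p \<circ> p = p\<close> by (simp add: comp_assoc)
    have "p \<circ> e \<in> kernel E" using minimal_left_ideal_comp[OF L \<open>p \<in> E\<close> e(1)] .
    moreover have "(p \<circ> e) \<circ> (p \<circ> e) = p \<circ> e"
      by (metis comp_assoc e(2) \<open>e \<circ> p = e\<close>)
    moreover have "idem_le (p \<circ> e) p"
      unfolding idem_le_def by (metis comp_assoc \<open>e \<circ> p = e\<close> \<open>p \<circ> p = p\<close>)
    ultimately show ?thesis
      using p_min minimal_left_ideal_subset[OF L] by (metis subsetD)
  qed
  then show ?thesis
    using minimal_idempotentI[OF L] unfolding minimal_idempotents_def by blast
qed

lemma minimal_idempotents_nonempty: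
  assumes "\<exists>!L. minimal_left_ideal E L"
  shows "minimal_idempotents E \<noteq> {}"
  using minimal_idempotents_eq[OF assms] minimal_left_ideal_iff_kernel[OF assms]
    minimal_left_ideal_has_idempotent by blast

end

section \<open>Enveloping semigroups of a flow and of its half-lines\<close>

lemma enveloping_mono: "S \<subseteq> S' \<Longrightarrow> enveloping \<alpha> S \<subseteq> enveloping \<alpha> S'"
  unfolding enveloping_def by (intro closure_mono image_mono)

lemma proximal_on_iff_enveloping:
  fixes \<alpha> :: "real \<Rightarrow> 'a::metric_space \<Rightarrow> 'a"
  assumes "compact (enveloping \<alpha> S)" and "S \<noteq> {}"
  shows "proximal_on \<alpha> S x y \<longleftrightarrow> (\<exists>p\<in>enveloping \<alpha> S. p x = p y)"
proof -
  define f where "f = (\<lambda>p::'a \<Rightarrow> 'a. dist (p x) (p y))"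
  have f: "continuous_on UNIV f" unfolding f_def
    by (intro continuous_on_dist continuous_on_product_coordinates)
  have "f ` closure (\<alpha> ` S) \<subseteq> closure (f ` \<alpha> ` S)"
    by (rule image_closure_subset[OF continuous_on_subset[OF f] closed_closure])
      (auto intro: closure_subset[THEN subsetD])
  moreover have "closure (f ` \<alpha> ` S) \<subseteq> f ` closure (\<alpha> ` S)"
    using assms(1) unfolding enveloping_def
    by (intro closure_minimal compact_imp_closed compact_continuous_image
        continuous_on_subset[OF f] image_mono closure_subset) auto
  ultimately have image: "f ` enveloping \<alpha> S = closure (f ` \<alpha> ` S)"
    unfolding enveloping_def by blast
  have bdd: "bdd_below (f ` \<alpha> ` S)" by (rule bdd_belowI[of _ 0]) (auto simp: f_def)
  have "proximal_on \<alpha> S x y \<longleftrightarrow> Inf (f ` \<alpha> ` S) = 0"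
    by (simp add: proximal_on_def f_def image_image)
  also have "\<dots> \<longleftrightarrow> 0 \<in> closure (f ` \<alpha> ` S)"
  proof
    show "Inf (f ` \<alpha> ` S) = 0 \<Longrightarrow> 0 \<in> closure (f ` \<alpha> ` S)"
      using closure_contains_Inf[OF _ bdd] \<open>S \<noteq> {}\<close> by auto
  next
    assume "0 \<in> closure (f ` \<alpha> ` S)"
    have "f ` \<alpha> ` S \<subseteq> {Inf (f ` \<alpha> ` S)..}"
      using bdd by (auto intro: cInf_lower)
    then have "closure (f ` \<alpha> ` S) \<subseteq> {Inf (f ` \<alpha> ` S)..}"
      by (rule closure_minimal) simp
    moreover have "0 \<le> Inf (f ` \<alpha> ` S)"
      using \<open>S \<noteq> {}\<close> by (intro cInf_greatest) (auto simp: f_def)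
    ultimately show "Inf (f ` \<alpha> ` S) = 0"
      using \<open>0 \<in> closure (f ` \<alpha> ` S)\<close> by fastforce
  qed
  also have "\<dots> \<longleftrightarrow> (\<exists>p\<in>enveloping \<alpha> S. f p = 0)"
    unfolding image[symmetric] by (auto simp: image_iff eq_commute[of 0])
  finally show ?thesis by (simp add: f_def)
qed

locale flow =
  fixes \<alpha> :: "real \<Rightarrow> 'a::metric_space \<Rightarrow> 'a" and T :: "real set"
  assumes compact_UNIV: "compact (UNIV :: 'a set)"
    and zero_in_T: "0 \<in> T"
    and add_in_T: "\<And>s t. s \<in> T \<Longrightarrow> t \<in> T \<Longrightarrow> s + t \<in> T"
    and uminus_in_T: "\<And>t. t \<in> T \<Longrightarrow> - t \<in> T"
    and \<alpha>_zero: "\<alpha> 0 = id"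
    and \<alpha>_add: "\<And>s t. s \<in> T \<Longrightarrow> t \<in> T \<Longrightarrow> \<alpha> (s + t) = \<alpha> s \<circ> \<alpha> t"
    and continuous_\<alpha>: "\<And>t. t \<in> T \<Longrightarrow> continuous_on UNIV (\<alpha> t)"
begin

definition time_submonoid :: "real set \<Rightarrow> bool" where
  "time_submonoid S \<longleftrightarrow> S \<subseteq> T \<and> 0 \<in> S \<and> (\<forall>s\<in>S. \<forall>t\<in>S. s + t \<in> S)"

definition total_submonoid :: "real set \<Rightarrow> bool" where
  "total_submonoid S \<longleftrightarrow> time_submonoid S \<and> (\<forall>t\<in>T. t \<in> S \<or> - t \<in> S)"

lemma total_submonoid_time_submonoid: "total_submonoid S \<Longrightarrow> time_submonoid S"
  unfolding total_submonoid_def by blast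

lemma time_submonoid_T: "time_submonoid T"
  unfolding time_submonoid_def using zero_in_T add_in_T by blast

lemma total_submonoid_nonneg: "total_submonoid {t\<in>T. 0 \<le> t}"
  and total_submonoid_nonpos: "total_submonoid {t\<in>T. t \<le> 0}"
  unfolding total_submonoid_def time_submonoid_def using zero_in_T add_in_T uminus_in_T by auto

lemma self_map_monoid_time_maps:
  assumes "time_submonoid S"
  shows "self_map_monoid (\<alpha> ` S)"
proof
  show "compact (UNIV :: 'a set)" by (rule compact_UNIV)
  show "id \<in> \<alpha> ` S" using assms \<alpha>_zero unfolding time_submonoid_def by force
  fix f g assume "f \<in> \<alpha> ` S" "g \<in> \<alpha> ` S"
  then obtain s t where "s \<in> S" "t \<in> S" "f = \<alpha> s" "g = \<alpha> t" by blast
  with assms show "continuous_on UNIV f" "f \<circ> g \<in> \<alpha> ` S"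
    unfolding time_submonoid_def using continuous_\<alpha> \<alpha>_add[symmetric]
    by (auto intro!: image_eqI[of _ _ "s + t"])
qed

lemma transitive_proximal_on_iff:
  assumes "time_submonoid S"
  shows "transitive_rel (proximal_on \<alpha> S) \<longleftrightarrow> (\<exists>!L. minimal_left_ideal (enveloping \<alpha> S) L)"
proof -
  interpret self_map_monoid "\<alpha> ` S" using assms by (rule self_map_monoid_time_maps)
  have "S \<noteq> {}" using assms unfolding time_submonoid_def by blast
  then have "proximal_on \<alpha> S x y \<longleftrightarrow> proximal x y" for x y
    using proximal_on_iff_enveloping[of \<alpha> S x y] compact_E unfolding proximal_def enveloping_def by blast
  then have "proximal_on \<alpha> S = proximal" by blast
  then show ?thesis
    using transitive_proximal_iff_unique_minimal_left_ideal by (simp add: enveloping_def)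
qed

lemma minimal_left_ideal_enveloping_iff_kernel:
  assumes "time_submonoid S" "transitive_rel (proximal_on \<alpha> S)"
  shows "minimal_left_ideal (enveloping \<alpha> S) L \<longleftrightarrow> L = kernel (enveloping \<alpha> S)"
proof -
  interpret self_map_monoid "\<alpha> ` S" using assms(1) by (rule self_map_monoid_time_maps)
  show ?thesis
    using minimal_left_ideal_iff_kernel transitive_proximal_on_iff[OF assms(1)] assms(2)
    unfolding enveloping_def by blast
qed

lemma minimal_idempotents_enveloping:
  assumes "time_submonoid S" "transitive_rel (proximal_on \<alpha> S)"
  shows "minimal_idempotents (enveloping \<alpha> S) = {p \<in> kernel (enveloping \<alpha> S). p \<circ> p = p}"
    and "minimal_idempotents (enveloping \<alpha> S) \<noteq> {}"
proof -
  interpret self_map_monoid "\<alpha> ` S" using assms(1) by (rule self_map_monoid_time_maps)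
  have "\<exists>!L. minimal_left_ideal E L"
    using transitive_proximal_on_iff[OF assms(1)] assms(2) unfolding enveloping_def by blast
  then show "minimal_idempotents (enveloping \<alpha> S) = {p \<in> kernel (enveloping \<alpha> S). p \<circ> p = p}"
    and "minimal_idempotents (enveloping \<alpha> S) \<noteq> {}"
    unfolding enveloping_def by (rule minimal_idempotents_eq, rule minimal_idempotents_nonempty)
qed

lemma enveloping_commute:
  assumes "p \<in> enveloping \<alpha> T" "s \<in> T"
  shows "p \<circ> \<alpha> s = \<alpha> s \<circ> p"
proof -
  have "closed {p. p \<circ> \<alpha> s = \<alpha> s \<circ> p}"
  proof (rule closed_Collect_fun_eq)
    fix y
    show "continuous_on UNIV (\<lambda>p. (p \<circ> \<alpha> s) y)" by (simp add: o_def)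
    show "continuous_on UNIV (\<lambda>p. (\<alpha> s \<circ> p) y)" unfolding o_def
      by (rule continuous_on_compose2[OF continuous_\<alpha>[OF \<open>s \<in> T\<close>] continuous_on_product_coordinates]) simp
  qed
  moreover have "\<alpha> t \<circ> \<alpha> s = \<alpha> s \<circ> \<alpha> t" if "t \<in> T" for t
    using \<alpha>_add[OF that \<open>s \<in> T\<close>] \<alpha>_add[OF \<open>s \<in> T\<close> that] by (simp add: add.commute)
  then have "\<alpha> ` T \<subseteq> {p. p \<circ> \<alpha> s = \<alpha> s \<circ> p}" by blast
  ultimately show ?thesis using assms(1) closure_minimal unfolding enveloping_def by blast
qed

lemma time_map_comp_minimal_left_ideal:
  assumes S: "time_submonoid S" and L: "minimal_left_ideal (enveloping \<alpha> S) L" and "s \<in> S"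
  shows "(\<lambda>l. \<alpha> s \<circ> l) ` L = L"
proof (rule minimal_left_idealD[OF L])
  have "S \<subseteq> T" using S unfolding time_submonoid_def by blast
  have \<alpha>_s: "\<alpha> s \<in> enveloping \<alpha> S"
    unfolding enveloping_def by (rule closure_subset[THEN subsetD, OF imageI[OF \<open>s \<in> S\<close>]])
  then show "(\<lambda>l. \<alpha> s \<circ> l) ` L \<subseteq> L" using minimal_left_ideal_comp[OF L] by blast
  show "left_ideal (enveloping \<alpha> S) ((\<lambda>l. \<alpha> s \<circ> l) ` L)"
    unfolding left_ideal_def
  proof (intro conjI ballI)
    show "(\<lambda>l. \<alpha> s \<circ> l) ` L \<noteq> {}" using minimal_left_ideal_nonempty[OF L] by blast
    show "(\<lambda>l. \<alpha> s \<circ> l) ` L \<subseteq> enveloping \<alpha> S"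
      using minimal_left_ideal_comp[OF L \<alpha>_s] minimal_left_ideal_subset[OF L] by blast
    fix q r assume "q \<in> enveloping \<alpha> S" "r \<in> (\<lambda>l. \<alpha> s \<circ> l) ` L"
    then obtain l where "l \<in> L" "q \<circ> r = (q \<circ> \<alpha> s) \<circ> l" by (auto simp: o_assoc)
    moreover have "q \<circ> \<alpha> s = \<alpha> s \<circ> q"
      using enveloping_commute enveloping_mono[OF \<open>S \<subseteq> T\<close>] \<open>q \<in> enveloping \<alpha> S\<close> \<open>S \<subseteq> T\<close> \<open>s \<in> S\<close>
      by blast
    ultimately show "q \<circ> r \<in> (\<lambda>l. \<alpha> s \<circ> l) ` L"
      using minimal_left_ideal_comp[OF L \<open>q \<in> enveloping \<alpha> S\<close>] by (auto simp: comp_assoc)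
  qed
qed

lemma left_ideal_of_minimal_left_ideal_total_submonoid:
  assumes S: "total_submonoid S" and L: "minimal_left_ideal (enveloping \<alpha> S) L"
  shows "left_ideal (enveloping \<alpha> T) L"
proof -
  have S_monoid: "time_submonoid S" using S by (rule total_submonoid_time_submonoid)
  interpret S: self_map_monoid "\<alpha> ` S" using S_monoid by (rule self_map_monoid_time_maps)
  have "S \<subseteq> T" using S_monoid unfolding time_submonoid_def by blast
  have "\<alpha> t \<circ> l \<in> L" if "t \<in> T" "l \<in> L" for t l
  proof (cases "t \<in> S")
    case True
    then have "\<alpha> t \<in> enveloping \<alpha> S"
      unfolding enveloping_def by (rule closure_subset[THEN subsetD, OF imageI])
    then show ?thesis using minimal_left_ideal_comp[OF L] \<open>l \<in> L\<close> by blast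
  next
    case False
    then obtain l' where "l' \<in> L" "l = \<alpha> (- t) \<circ> l'"
      using S \<open>t \<in> T\<close> time_map_comp_minimal_left_ideal[OF S_monoid L] \<open>l \<in> L\<close>
      unfolding total_submonoid_def by blast
    moreover have "\<alpha> t \<circ> \<alpha> (- t) = id" using \<alpha>_add[OF \<open>t \<in> T\<close> uminus_in_T[OF \<open>t \<in> T\<close>]] \<alpha>_zero by simp
    ultimately show ?thesis by (simp add: o_assoc)
  qed
  \<comment> \<open>from the maps \<open>\<alpha> t\<close> to their closure: \<open>p \<mapsto> p \<circ> l\<close> is continuous and \<open>L\<close> is closed\<close>
  then have "(\<lambda>p. p \<circ> l) ` enveloping \<alpha> T \<subseteq> L" if "l \<in> L" for l
    unfolding enveloping_def using that S.closed_minimal_left_ideal[folded enveloping_def, OF L]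
    by (intro image_closure_subset continuous_on_subset[OF continuous_on_comp_right]) auto
  then show ?thesis
    using minimal_left_ideal_nonempty[OF L] minimal_left_ideal_subset[OF L] enveloping_mono[OF \<open>S \<subseteq> T\<close>]
    unfolding left_ideal_def by blast
qed

lemma minimal_left_ideal_total_submonoid:
  assumes S: "total_submonoid S" and L: "minimal_left_ideal (enveloping \<alpha> S) L"
  shows "minimal_left_ideal (enveloping \<alpha> T) L"
proof -
  have "S \<subseteq> T" using S unfolding total_submonoid_def time_submonoid_def by blast
  have "J = L" if "left_ideal (enveloping \<alpha> T) J" "J \<subseteq> L" for J
  proof -
    have "left_ideal (enveloping \<alpha> S) J"
      using that enveloping_mono[OF \<open>S \<subseteq> T\<close>] minimal_left_ideal_subset[OF L]
      unfolding left_ideal_def by blast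
    then show ?thesis using minimal_left_idealD[OF L] \<open>J \<subseteq> L\<close> by blast
  qed
  then show ?thesis
    using left_ideal_of_minimal_left_ideal_total_submonoid[OF S L] unfolding minimal_left_ideal_def by blast
qed

lemma minimal_left_ideal_kernel_total_submonoid:
  assumes "total_submonoid S" "transitive_rel (proximal_on \<alpha> S)"
  shows "minimal_left_ideal (enveloping \<alpha> T) (kernel (enveloping \<alpha> S))"
  using assms minimal_left_ideal_total_submonoid minimal_left_ideal_enveloping_iff_kernel total_submonoid_time_submonoid
  by blast

lemma minimal_left_ideal_eq_kernel_total_submonoid:
  assumes S: "total_submonoid S" "transitive_rel (proximal_on \<alpha> S)"
    and L: "minimal_left_ideal (enveloping \<alpha> T) L" and "p \<in> L" "p \<in> enveloping \<alpha> S"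
  shows "L = kernel (enveloping \<alpha> S)"
proof -
  have S_monoid: "time_submonoid S" using S(1) by (rule total_submonoid_time_submonoid)
  interpret S: self_map_monoid "\<alpha> ` S" using S_monoid by (rule self_map_monoid_time_maps)
  have "S \<subseteq> T" using S_monoid unfolding time_submonoid_def by blast
  obtain L' where L': "minimal_left_ideal (enveloping \<alpha> S) L'" "L' \<subseteq> (\<lambda>q. q \<circ> p) ` enveloping \<alpha> S"
    using S.minimal_left_ideal_exists[OF S.left_ideal_principal] \<open>p \<in> enveloping \<alpha> S\<close>
    unfolding enveloping_def by blast
  have "L' = kernel (enveloping \<alpha> S)"
    using minimal_left_ideal_enveloping_iff_kernel[OF S_monoid S(2)] L'(1) by blast
  moreover have "(\<lambda>q. q \<circ> p) ` enveloping \<alpha> S \<subseteq> L"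
    using minimal_left_ideal_comp[OF L _ \<open>p \<in> L\<close>] enveloping_mono[OF \<open>S \<subseteq> T\<close>] by blast
  ultimately have "kernel (enveloping \<alpha> S) \<inter> L \<noteq> {}"
    using L' minimal_left_ideal_nonempty by blast
  then show ?thesis
    using minimal_left_ideals_disjoint[OF minimal_left_ideal_kernel_total_submonoid[OF S] L] by blast
qed

lemma minimal_left_ideals_enveloping:
  assumes "transitive_rel (proximal_on \<alpha> {t\<in>T. 0 \<le> t})" "transitive_rel (proximal_on \<alpha> {t\<in>T. t \<le> 0})"
  shows "{L. minimal_left_ideal (enveloping \<alpha> T) L}
    = {kernel (enveloping \<alpha> {t\<in>T. 0 \<le> t}), kernel (enveloping \<alpha> {t\<in>T. t \<le> 0})}"
proof -
  have "T = {t\<in>T. 0 \<le> t} \<union> {t\<in>T. t \<le> 0}" by auto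
  then have "\<alpha> ` T = \<alpha> ` {t\<in>T. 0 \<le> t} \<union> \<alpha> ` {t\<in>T. t \<le> 0}" by (metis image_Un)
  then have E: "enveloping \<alpha> T = enveloping \<alpha> {t\<in>T. 0 \<le> t} \<union> enveloping \<alpha> {t\<in>T. t \<le> 0}"
    unfolding enveloping_def by (simp only: closure_Un)
  have "L = kernel (enveloping \<alpha> {t\<in>T. 0 \<le> t}) \<or> L = kernel (enveloping \<alpha> {t\<in>T. t \<le> 0})"
    if L: "minimal_left_ideal (enveloping \<alpha> T) L" for L
  proof -
    obtain p where "p \<in> L" "p \<in> enveloping \<alpha> T"
      using minimal_left_ideal_nonempty[OF L] minimal_left_ideal_subset[OF L] by blast
    then show ?thesis
      using E minimal_left_ideal_eq_kernel_total_submonoid[OF total_submonoid_nonneg assms(1) L]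
        minimal_left_ideal_eq_kernel_total_submonoid[OF total_submonoid_nonpos assms(2) L] by blast
  qed
  then show ?thesis
    using minimal_left_ideal_kernel_total_submonoid[OF total_submonoid_nonneg assms(1)]
      minimal_left_ideal_kernel_total_submonoid[OF total_submonoid_nonpos assms(2)] by blast
qed

end

theorem theorem3p9:
  fixes \<alpha> :: "real \<Rightarrow> 'a::metric_space \<Rightarrow> 'a" and T :: "real set"
  assumes cpt: "compact (UNIV :: 'a set)"
    and T: "T = \<int> \<or> T = UNIV"
    and zero: "\<alpha> 0 = id"
    and add: "\<forall>s\<in>T. \<forall>t\<in>T. \<alpha> (s + t) = \<alpha> s \<circ> \<alpha> t"
    and homeo: "\<forall>t\<in>T. \<exists>g. homeomorphism UNIV UNIV (\<alpha> t) g"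
    and fwd: "transitive_rel (proximal_on \<alpha> {t\<in>T. t \<ge> 0})"
    and bwd: "transitive_rel (proximal_on \<alpha> {t\<in>T. t \<le> 0})"
  shows
    "let E = enveloping \<alpha> T;
         Ep = enveloping \<alpha> {t\<in>T. t \<ge> 0};
         Em = enveloping \<alpha> {t\<in>T. t \<le> 0};
         M = kernel E; Mp = kernel Ep; Mm = kernel Em;
         Jp = minimal_idempotents Ep; Jm = minimal_idempotents Em;
         c1i = transitive_rel (proximal_on \<alpha> T);
         c1ii = (\<exists>!I. minimal_left_ideal E I);
         c1iii = (M = Mp \<and> Mp = Mm);
         c1iv = (Jp = Jm);
         c2i = (\<not> transitive_rel (proximal_on \<alpha> T));
         c2ii = ({I. minimal_left_ideal E I} = {Mp, Mm} \<and> Mp \<noteq> Mm);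
         c2iii = (Mp \<inter> Mm = {});
         c2iv = (Jp \<inter> Jm = {});
         case1 = (c1i \<and> c1ii \<and> c1iii \<and> c1iv);
         case2 = (c2i \<and> c2ii \<and> c2iii \<and> c2iv)
     in (c1i \<longleftrightarrow> c1ii) \<and> (c1i \<longleftrightarrow> c1iii) \<and> (c1i \<longleftrightarrow> c1iv)
      \<and> (c2i \<longleftrightarrow> c2ii) \<and> (c2i \<longleftrightarrow> c2iii) \<and> (c2i \<longleftrightarrow> c2iv)
      \<and> (case1 \<noteq> case2)"
proof -
  interpret flow \<alpha> T
    by unfold_locales (use T cpt zero add homeo in \<open>auto simp: homeomorphism_def\<close>)
  define Mp Mm where "Mp = kernel (enveloping \<alpha> {t\<in>T. 0 \<le> t})" and "Mm = kernel (enveloping \<alpha> {t\<in>T. t \<le> 0})"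
  define Jp Jm where "Jp = minimal_idempotents (enveloping \<alpha> {t\<in>T. 0 \<le> t})"
    and "Jm = minimal_idempotents (enveloping \<alpha> {t\<in>T. t \<le> 0})"
  have ideals: "{L. minimal_left_ideal (enveloping \<alpha> T) L} = {Mp, Mm}"
    unfolding Mp_def Mm_def by (rule minimal_left_ideals_enveloping[OF fwd bwd])
  then have Mp: "minimal_left_ideal (enveloping \<alpha> T) Mp" and Mm: "minimal_left_ideal (enveloping \<alpha> T) Mm"
    by auto
  have unique_iff: "(\<exists>!L. minimal_left_ideal (enveloping \<alpha> T) L) \<longleftrightarrow> Mp = Mm"
    using ideals by (auto simp: set_eq_iff)
  have transitive_iff: "transitive_rel (proximal_on \<alpha> T) \<longleftrightarrow> Mp = Mm"
    using transitive_proximal_on_iff[OF time_submonoid_T] unique_iff by blast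
  have kernel_iff: "kernel (enveloping \<alpha> T) = Mp \<and> Mp = Mm \<longleftrightarrow> Mp = Mm"
    using minimal_left_ideal_enveloping_iff_kernel[OF time_submonoid_T] transitive_iff Mp by blast
  have disjoint_iff: "Mp \<inter> Mm = {} \<longleftrightarrow> Mp \<noteq> Mm"
    using minimal_left_ideals_disjoint[OF Mp Mm] minimal_left_ideal_nonempty[OF Mp] by blast
  from minimal_idempotents_enveloping[OF total_submonoid_nonneg[THEN total_submonoid_time_submonoid] fwd]
    minimal_idempotents_enveloping[OF total_submonoid_nonpos[THEN total_submonoid_time_submonoid] bwd]
  have "Jp = {p \<in> Mp. p \<circ> p = p}" "Jp \<noteq> {}" "Jm = {p \<in> Mm. p \<circ> p = p}" "Jm \<noteq> {}"
    unfolding Jp_def Jm_def Mp_def Mm_def by blast+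
  then have "Jp = Jm \<longleftrightarrow> Mp = Mm" "Jp \<inter> Jm = {} \<longleftrightarrow> Mp \<noteq> Mm"
    using disjoint_iff by blast+
  then show ?thesis
    unfolding Let_def Mp_def[symmetric] Mm_def[symmetric] Jp_def[symmetric] Jm_def[symmetric]
    using ideals unique_iff transitive_iff kernel_iff disjoint_iff by simp
qed

end
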